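(* Let $d \ge 1$ and equip $\mathbb{R}^d$ with the Euclidean norm $\|\cdot\|_2$. For a set $\mathcal{S}\subset\mathbb{R}^d$ write $\mathrm{dist}(x,\mathcal{S}) = \inf_{s\in\mathcal{S}}\|x-s\|_2$ and $\mathcal{B}(\mathcal{S},r) = \{x\in\mathbb{R}^d : \mathrm{dist}(x,\mathcal{S})\le r\}$. Let $\epsilon>0$ and $\delta > 2\epsilon$. Let $n$ and $B$ be two modalities, and for each class $c\in\{1,\ldots,K\}$ let $\mathcal{M}_c^{(n)},\mathcal{M}_c^{(B)}\subset\mathbb{R}^d$ be nonempty class structures such that, for each modality $m\in\{n,B\}$ and all $i\ne j$, $\inf_{u\in\mathcal{M}_i^{(m)},\,v\in\mathcal{M}_j^{(m)}}\|u-v\|_2 \ge \delta$. Let $y \ne k$ be two classes, and let $z^{(n)}\in\mathcal{B}(\mathcal{M}_y^{(n)},\epsilon)$ and $z^{(B)}\in\mathcal{B}(\mathcal{M}_k^{(B)},\epsilon)$. Let $\Phi_{n\to B}:\mathbb{R}^d\to\mathbb{R}^d$ be a map that is $\xi$-semantically consistent for some $0\le\xi\le\epsilon$, i.e. $\mathrm{dist}(\Phi_{n\to B}(u),\mathcal{M}_y^{(B)})\le\xi$ for every $u\in\mathcal{B}(\mathcal{M}_y^{(n)},\epsilon)$. Then $$\mathcal{E}_{\mathrm{inter}}^{(n\to B)} := \|\Phi_{n\to B}(z^{(n)}) - z^{(B)}\|_2^2 \ge (\delta-2\epsilon)^2.$$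
   Context: Setting: latent representations of each modality lie in $\mathbb{R}^d$. The paper assumes (latent space regularity) that representations of class $c$ from modality $m$ concentrate within distance $\epsilon$ of a class structure $\mathcal{M}_c^{(m)}$, and that distinct class structures within each modality are separated by margin $\delta>2\epsilon$. "$z^{(n)}$ encodes class $y$" means $z^{(n)}\in\mathcal{B}(\mathcal{M}_y^{(n)},\epsilon)$; "$z^{(B)}$ encodes a conflicting class $k\neq y$" means $z^{(B)}\in\mathcal{B}(\mathcal{M}_k^{(B)},\epsilon)$. In the paper the cross-modal map is the one-step map $\Phi_{n\to B}(z) = z + v_\Phi^{(n\to B)}(z,0)$ induced by a learned velocity field $v_\Phi^{(n\to B)}$, but the result only uses the stated consistency property. *)

theory Defs
  imports "HOL-Analysis.Analysis"
begin

definition nbhd :: "'a::metric_space set \<Rightarrow> real \<Rightarrow> 'a set" where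
  "nbhd S r = {x. infdist x S \<le> r}"

end

theory Submission
  imports Defs
begin

text \<open>The target structure of class y and the structure of the conflicting class k in
  modality B are \<delta>-separated. The image \<Phi> zn lies within \<xi> \<le> \<epsilon> of the former and zB within \<epsilon>
  of the latter, so by the triangle inequality the two points are at distance at least
  \<delta> - 2\<epsilon> > 0.\<close>

lemma dist_ge_of_INF_dist_ge:
  fixes A B :: "'a::metric_space set"
  assumes "(INF p \<in> A \<times> B. dist (fst p) (snd p)) \<ge> \<delta>" "u \<in> A" "v \<in> B"
  shows "dist u v \<ge> \<delta>"
proof -
  have "bdd_below ((\<lambda>p. dist (fst p) (snd p)) ` (A \<times> B))"
    by (rule bdd_belowI[where m = 0]) auto
  then have "(INF p \<in> A \<times> B. dist (fst p) (snd p)) \<le> dist u v"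
    using assms(2,3) by (auto intro: cINF_lower2)
  with assms(1) show ?thesis by linarith
qed

lemma infdist_ge_of_separated:
  fixes B :: "'a::metric_space set"
  assumes "B \<noteq> {}" "\<And>v. v \<in> B \<Longrightarrow> dist u v \<ge> \<delta>"
  shows "infdist u B \<ge> \<delta>"
  unfolding infdist_notempty[OF assms(1)]
  by (rule cINF_greatest) (use assms in auto)

lemma dist_ge_of_separated_nbhd:
  fixes A B :: "'a::metric_space set"
  assumes "A \<noteq> {}" "B \<noteq> {}" "\<And>u v. u \<in> A \<Longrightarrow> v \<in> B \<Longrightarrow> dist u v \<ge> \<delta>"
    and "x \<in> nbhd A r" "z \<in> nbhd B s"
  shows "dist x z \<ge> \<delta> - r - s"
proof -
  have far: "dist z u \<ge> \<delta> - s" if "u \<in> A" for u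
  proof -
    have "\<delta> \<le> infdist u B"
      using assms(2,3) that by (blast intro: infdist_ge_of_separated)
    also have "\<dots> \<le> infdist z B + dist u z"
      by (rule infdist_triangle)
    finally show ?thesis
      using assms(5) by (simp add: nbhd_def dist_commute)
  qed
  have "\<delta> - s \<le> infdist z A"
    using infdist_ge_of_separated[OF assms(1) far] .
  also have "\<dots> \<le> infdist x A + dist z x"
    by (rule infdist_triangle)
  finally show ?thesis
    using assms(4) by (simp add: nbhd_def dist_commute)
qed

theorem theorem4p4:
  fixes Mn MB :: "nat \<Rightarrow> 'a::euclidean_space set"
    and K y k :: nat and \<epsilon> \<delta> \<xi> :: real
    and zn zB :: 'a and \<Phi> :: "'a \<Rightarrow> 'a"
  assumes eps: "\<epsilon> > 0" and del: "\<delta> > 2 * \<epsilon>"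
    and ne_n: "\<And>c. c \<in> {1..K} \<Longrightarrow> Mn c \<noteq> {}"
    and ne_B: "\<And>c. c \<in> {1..K} \<Longrightarrow> MB c \<noteq> {}"
    and sep_n: "\<And>i j. i \<in> {1..K} \<Longrightarrow> j \<in> {1..K} \<Longrightarrow> i \<noteq> j \<Longrightarrow>
                  (INF p \<in> Mn i \<times> Mn j. dist (fst p) (snd p)) \<ge> \<delta>"
    and sep_B: "\<And>i j. i \<in> {1..K} \<Longrightarrow> j \<in> {1..K} \<Longrightarrow> i \<noteq> j \<Longrightarrow>
                  (INF p \<in> MB i \<times> MB j. dist (fst p) (snd p)) \<ge> \<delta>"
    and y: "y \<in> {1..K}" and k: "k \<in> {1..K}" and yk: "y \<noteq> k"
    and zn: "zn \<in> nbhd (Mn y) \<epsilon>" and zB: "zB \<in> nbhd (MB k) \<epsilon>"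
    and xi: "0 \<le> \<xi>" "\<xi> \<le> \<epsilon>"
    and cons: "\<And>u. u \<in> nbhd (Mn y) \<epsilon> \<Longrightarrow> infdist (\<Phi> u) (MB y) \<le> \<xi>"
  shows "(norm (\<Phi> zn - zB))\<^sup>2 \<ge> (\<delta> - 2 * \<epsilon>)\<^sup>2"
proof -
  have "\<Phi> zn \<in> nbhd (MB y) \<xi>"
    using cons[OF zn] by (simp add: nbhd_def)
  then have "dist (\<Phi> zn) zB \<ge> \<delta> - \<xi> - \<epsilon>"
    using dist_ge_of_separated_nbhd[OF ne_B[OF y] ne_B[OF k]
        dist_ge_of_INF_dist_ge[OF sep_B[OF y k yk]]] zB
    by blast
  then have "norm (\<Phi> zn - zB) \<ge> \<delta> - 2 * \<epsilon>"
    using xi(2) by (simp add: dist_norm)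
  moreover have "0 \<le> \<delta> - 2 * \<epsilon>"
    using del by simp
  ultimately show ?thesis
    by (simp add: power_mono)
qed

end
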